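(* Let $G=(V,E)$ be a finite weakly connected directed graph with $V=\{1,\dots,n\}$, nonnegative adjacency matrix $W$ in which every row has a positive entry, $D=\operatorname{diag}(d_1,\dots,d_n)$ with $d_i=\sum_j W_{ij}$, and $P=D^{-1}W$. Let $A=\operatorname{diag}(\alpha_1,\dots,\alpha_n)$ with $\alpha_i\in[0,1)$ for all $i$, and let $v$ be a probability vector on $V$. Then the Location-of-Restart Personalized PageRank $\rho(v)$ (a row vector) satisfies $$\rho(v)=v^T[I-AP]^{-1}[I-A].$$
   Context: Consider the random walk $(X_t)_{t\ge0}$ on $V$ in which, at each step from the current node $i$, with probability $1-\alpha_i$ a restart occurs at time $t+1$ and $X_{t+1}$ is drawn from $v$, and otherwise $X_{t+1}=j$ with probability $P_{ij}$; its transition matrix is $AP+(I-A)\underline{1}v^T$, with $\underline{1}$ the all-ones column vector. The Location-of-Restart Personalized PageRank is $\rho_j(v)=\lim_{t\to\infty}\mathbb P(X_t=j\mid \text{a restart occurs at time } t+1)$, i.e. the long-run distribution of the node occupied just before a restart. *)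

theory Defs
  imports "HOL-Analysis.Analysis"
begin

text \<open>Vertex set V is a finite type 'n (V = {1..n}); matrices are real^'n^'n.\<close>

definition edges :: "real^'n^'n \<Rightarrow> ('n \<times> 'n) set" where
  "edges W = {(i, j). W $ i $ j \<noteq> 0}"

definition weakly_connected :: "real^'n^'n \<Rightarrow> bool" where
  "weakly_connected W \<longleftrightarrow> (\<forall>i j. (i, j) \<in> (edges W \<union> (edges W)\<inverse>)\<^sup>*)"

definition degree_matrix :: "real^'n^'n \<Rightarrow> real^'n^'n" where
  "degree_matrix W = (\<chi> i j. if i = j then (\<Sum>k\<in>UNIV. W $ i $ k) else 0)"

definition trans_matrix :: "real^'n^'n \<Rightarrow> real^'n^'n" where
  "trans_matrix W = matrix_inv (degree_matrix W) ** W"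

definition diag_mat :: "real^'n \<Rightarrow> real^'n^'n" where
  "diag_mat a = (\<chi> i j. if i = j then a $ i else 0)"

definition prob_vector :: "real^'n \<Rightarrow> bool" where
  "prob_vector v \<longleftrightarrow> (\<forall>i. v $ i \<ge> 0) \<and> (\<Sum>i\<in>UNIV. v $ i) = 1"

definition ones_vT :: "real^'n \<Rightarrow> real^'n^'n" where
  "ones_vT v = (\<chi> i j. v $ j)"

definition restart_walk_matrix :: "real^'n^'n \<Rightarrow> real^'n \<Rightarrow> real^'n \<Rightarrow> real^'n^'n" where
  "restart_walk_matrix W alpha v =
     diag_mat alpha ** trans_matrix W + (mat 1 - diag_mat alpha) ** ones_vT v"

fun walk_dist :: "real^'n^'n \<Rightarrow> real^'n \<Rightarrow> real^'n \<Rightarrow> real^'n \<Rightarrow> nat \<Rightarrow> real^'n" where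
  "walk_dist W alpha v mu0 0 = mu0"
| "walk_dist W alpha v mu0 (Suc t) = walk_dist W alpha v mu0 t v* restart_walk_matrix W alpha v"

text \<open>P(X_t = j and a restart occurs at time t+1) = P(X_t = j) (1 - alpha_j).\<close>
definition restart_joint :: "real^'n^'n \<Rightarrow> real^'n \<Rightarrow> real^'n \<Rightarrow> real^'n \<Rightarrow> nat \<Rightarrow> 'n \<Rightarrow> real" where
  "restart_joint W alpha v mu0 t j = walk_dist W alpha v mu0 t $ j * (1 - alpha $ j)"

definition restart_cond :: "real^'n^'n \<Rightarrow> real^'n \<Rightarrow> real^'n \<Rightarrow> real^'n \<Rightarrow> nat \<Rightarrow> 'n \<Rightarrow> real" where
  "restart_cond W alpha v mu0 t j =
     restart_joint W alpha v mu0 t j / (\<Sum>k\<in>UNIV. restart_joint W alpha v mu0 t k)"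

end

theory Submission
  imports Defs
begin

text \<open>
  Every row of the restart walk matrix M = A P + (I - A) 1 v^T dominates c v, where
  c = min_i (1 - alpha_i) > 0. By Doeblin's argument M contracts zero-sum vectors in the
  l1 norm by the factor 1 - c, so the walk converges to the stationary distribution of M
  from any start. By a maximum principle I - A P has trivial kernel, and x = v (I - A P)^-1
  satisfies x = v + x A P; summing gives x (I - A) 1 = 1, and then x M = x A P + v = x.
  Hence the limit law is x / (x 1), and conditioning on a restart reweights coordinate j by
  1 - alpha_j, the total weight being exactly 1 / (x 1); what remains is x (I - A).
\<close>

lemma matrix_inv:
  fixes A :: "real^'n^'n"
  assumes "invertible A"
  shows matrix_inv_left: "matrix_inv A ** A = mat 1"
    and matrix_inv_right: "A ** matrix_inv A = mat 1"
proof -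
  have "A ** matrix_inv A = mat 1 \<and> matrix_inv A ** A = mat 1"
    using assms unfolding invertible_def matrix_inv_def by (rule someI_ex)
  thus "matrix_inv A ** A = mat 1" "A ** matrix_inv A = mat 1" by simp_all
qed

lemma matrix_inv_unique_left:
  fixes A B :: "real^'n^'n"
  assumes "B ** A = mat 1"
  shows "matrix_inv A = B"
proof -
  have "invertible A" using assms invertible_left_inverse by blast
  hence "B = B ** (A ** matrix_inv A)" by (simp add: matrix_inv_right)
  also have "\<dots> = matrix_inv A" by (simp add: matrix_mul_assoc assms)
  finally show ?thesis by simp
qed

lemma diag_mat_mult_nth: "(diag_mat a ** A) $ i $ j = a $ i * A $ i $ j"
  by (simp add: diag_mat_def matrix_matrix_mult_def if_distrib[of "\<lambda>x. x * _"] cong: if_cong)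

lemma vector_mult_diag_mat_nth: "(x v* diag_mat a) $ j = x $ j * a $ j"
  by (simp add: diag_mat_def vector_matrix_mult_def if_distrib[of "\<lambda>x. _ * x"] cong: if_cong)

lemma diag_mat_vector_mult_nth: "(diag_mat a *v x) $ i = a $ i * x $ i"
  by (simp add: diag_mat_def matrix_vector_mult_def if_distrib[of "\<lambda>x. x * _"] cong: if_cong)

lemma mat_1_minus_diag_mat: "mat 1 - diag_mat a = diag_mat (1 - a)"
  by (simp add: diag_mat_def mat_def vec_eq_iff)

lemma matrix_inv_diag_mat:
  assumes "\<forall>i. a $ i \<noteq> 0"
  shows "matrix_inv (diag_mat a) = diag_mat (\<chi> i. 1 / a $ i)"
proof (rule matrix_inv_unique_left)
  show "diag_mat (\<chi> i. 1 / a $ i) ** diag_mat a = mat 1"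
    unfolding vec_eq_iff diag_mat_mult_nth using assms by (simp add: diag_mat_def mat_def)
qed

lemma vector_mult_ones_vT: "x v* ones_vT v = (\<Sum>i\<in>UNIV. x $ i) *\<^sub>R v"
  by (simp add: ones_vT_def vector_matrix_mult_def vec_eq_iff sum_distrib_right)

definition row_stochastic :: "real^'n^'n \<Rightarrow> bool" where
  "row_stochastic M \<longleftrightarrow> (\<forall>i j. 0 \<le> M $ i $ j) \<and> (\<forall>i. (\<Sum>j\<in>UNIV. M $ i $ j) = 1)"

lemma sum_vector_matrix_mult_stochastic:
  assumes "row_stochastic M"
  shows "(\<Sum>j\<in>UNIV. (x v* M) $ j) = (\<Sum>i\<in>UNIV. x $ i)"
  using assms
  by (simp add: row_stochastic_def vector_matrix_mult_def sum.swap[of _ UNIV]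
      sum_distrib_left[symmetric])

lemma trans_matrix_nth:
  assumes "\<forall>i. (\<Sum>k\<in>UNIV. W $ i $ k) \<noteq> 0"
  shows "trans_matrix W $ i $ j = W $ i $ j / (\<Sum>k\<in>UNIV. W $ i $ k)"
proof -
  have "degree_matrix W = diag_mat (\<chi> i. \<Sum>k\<in>UNIV. W $ i $ k)"
    by (simp add: degree_matrix_def diag_mat_def vec_eq_iff)
  thus ?thesis
    using assms by (simp add: trans_matrix_def matrix_inv_diag_mat diag_mat_mult_nth)
qed

lemma row_stochastic_trans_matrix:
  assumes nonneg: "\<forall>i j. W $ i $ j \<ge> 0" and rows: "\<forall>i. \<exists>j. W $ i $ j > 0"
  shows "row_stochastic (trans_matrix W)"
proof -
  have pos: "(\<Sum>k\<in>UNIV. W $ i $ k) > 0" for i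
  proof -
    obtain j where "W $ i $ j > 0" using rows by blast
    moreover have "W $ i $ j \<le> (\<Sum>k\<in>UNIV. W $ i $ k)"
      by (rule member_le_sum) (use nonneg in auto)
    ultimately show ?thesis by simp
  qed
  hence "\<forall>i. (\<Sum>k\<in>UNIV. W $ i $ k) \<noteq> 0" by (metis less_irrefl)
  thus ?thesis
    using nonneg pos
    by (simp add: row_stochastic_def trans_matrix_nth sum_divide_distrib[symmetric]
        less_imp_neq[symmetric] order_less_imp_le)
qed

lemma restart_walk_matrix_nth:
  "restart_walk_matrix W alpha v $ i $ j
     = alpha $ i * trans_matrix W $ i $ j + (1 - alpha $ i) * v $ j"
  by (simp add: restart_walk_matrix_def mat_1_minus_diag_mat diag_mat_mult_nth ones_vT_def)

lemma row_stochastic_restart_walk_matrix: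
  assumes P: "row_stochastic (trans_matrix W)"
    and alpha: "\<forall>i. 0 \<le> alpha $ i \<and> alpha $ i \<le> 1" and v: "prob_vector v"
  shows "row_stochastic (restart_walk_matrix W alpha v)"
  using assms
  unfolding row_stochastic_def prob_vector_def restart_walk_matrix_nth
  by (simp add: sum.distrib sum_distrib_left[symmetric])

lemma restart_walk_doeblin:
  assumes P: "row_stochastic (trans_matrix W)"
    and alpha: "\<forall>i. 0 \<le> alpha $ i \<and> alpha $ i < 1" and v: "prob_vector v"
  obtains c where "0 < c" and "\<forall>i j. c * v $ j \<le> restart_walk_matrix W alpha v $ i $ j"
proof
  define c where "c = Min (range (\<lambda>i. 1 - alpha $ i))"
  show "0 < c" using alpha by (simp add: c_def)
  show "\<forall>i j. c * v $ j \<le> restart_walk_matrix W alpha v $ i $ j"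
  proof (intro allI)
    fix i j
    have "c * v $ j \<le> (1 - alpha $ i) * v $ j"
      using v by (intro mult_right_mono) (auto simp: c_def prob_vector_def)
    also have "\<dots> \<le> restart_walk_matrix W alpha v $ i $ j"
      using alpha P by (simp add: restart_walk_matrix_nth row_stochastic_def)
    finally show "c * v $ j \<le> restart_walk_matrix W alpha v $ i $ j" .
  qed
qed

definition l1_norm :: "real^'n \<Rightarrow> real" where
  "l1_norm x = (\<Sum>i\<in>UNIV. \<bar>x $ i\<bar>)"

lemma l1_norm_contraction:
  fixes M :: "real^'n^'n"
  assumes M: "row_stochastic M" and minor: "\<forall>i j. c * v $ j \<le> M $ i $ j"
    and v: "(\<Sum>j\<in>UNIV. v $ j) = 1" and x: "(\<Sum>i\<in>UNIV. x $ i) = 0"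
  shows "l1_norm (x v* M) \<le> (1 - c) * l1_norm x"
proof -
  \<comment> \<open>Since x has zero sum, subtracting the common part c v from every row of M changes nothing.\<close>
  have "\<bar>(x v* M) $ j\<bar> = \<bar>\<Sum>i\<in>UNIV. x $ i * (M $ i $ j - c * v $ j)\<bar>" for j
    using x by (simp add: vector_matrix_mult_def right_diff_distrib sum_subtractf
        sum_distrib_right[symmetric])
  also have "\<dots> j \<le> (\<Sum>i\<in>UNIV. \<bar>x $ i\<bar> * (M $ i $ j - c * v $ j))" for j
    using minor by (auto simp: abs_mult intro: order_trans[OF sum_abs] sum_mono)
  finally have "l1_norm (x v* M) \<le> (\<Sum>j\<in>UNIV. \<Sum>i\<in>UNIV. \<bar>x $ i\<bar> * (M $ i $ j - c * v $ j))"
    unfolding l1_norm_def by (rule sum_mono)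
  also have "\<dots> = (\<Sum>i\<in>UNIV. \<bar>x $ i\<bar> * (\<Sum>j\<in>UNIV. M $ i $ j - c * v $ j))"
    by (subst sum.swap) (simp add: sum_distrib_left)
  also have "\<dots> = (1 - c) * l1_norm x"
    using M v by (simp add: row_stochastic_def l1_norm_def sum_subtractf
        sum_distrib_left[symmetric] sum_distrib_right mult.commute)
  finally show ?thesis .
qed

lemma minorization_constant_le_1:
  fixes M :: "real^'n^'n"
  assumes M: "row_stochastic M" and minor: "\<forall>i j. c * v $ j \<le> M $ i $ j"
    and v: "(\<Sum>j\<in>UNIV. v $ j) = 1"
  shows "c \<le> 1"
proof -
  have "c = (\<Sum>j\<in>UNIV. c * v $ j)" using v by (simp add: sum_distrib_left[symmetric])
  also have "\<dots> \<le> (\<Sum>j\<in>UNIV. M $ i $ j)" for i using minor by (intro sum_mono) auto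
  also have "\<dots> i = 1" for i using M by (simp add: row_stochastic_def)
  finally show ?thesis .
qed

lemma doeblin_zero_sum_fixed_point:
  fixes M :: "real^'n^'n"
  assumes M: "row_stochastic M" and c: "0 < c" and minor: "\<forall>i j. c * v $ j \<le> M $ i $ j"
    and v: "(\<Sum>j\<in>UNIV. v $ j) = 1"
    and fixed: "x v* M = x" and x: "(\<Sum>i\<in>UNIV. x $ i) = 0"
  shows "x = 0"
proof -
  have "l1_norm x \<le> (1 - c) * l1_norm x"
    using l1_norm_contraction[OF M minor v x] fixed by simp
  moreover have "0 \<le> l1_norm x" by (simp add: l1_norm_def sum_nonneg)
  ultimately have "c * l1_norm x \<le> 0" and "0 \<le> c * l1_norm x"
    using c by (simp_all add: algebra_simps)
  hence "l1_norm x = 0" using c by simp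
  thus ?thesis by (simp add: l1_norm_def vec_eq_iff sum_nonneg_eq_0_iff)
qed

lemma doeblin_tendsto_stationary:
  fixes M :: "real^'n^'n" and w :: "nat \<Rightarrow> real^'n"
  assumes M: "row_stochastic M" and c: "0 < c" and minor: "\<forall>i j. c * v $ j \<le> M $ i $ j"
    and v: "(\<Sum>j\<in>UNIV. v $ j) = 1"
    and q: "q v* M = q" "(\<Sum>i\<in>UNIV. q $ i) = 1"
    and w: "\<And>t. w (Suc t) = w t v* M" "(\<Sum>i\<in>UNIV. w 0 $ i) = 1"
  shows "(\<lambda>t. w t $ k) \<longlonglongrightarrow> q $ k"
proof -
  have c1: "c \<le> 1" using M minor v by (rule minorization_constant_le_1)
  have mass: "(\<Sum>i\<in>UNIV. w t $ i) = 1" for t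
    by (induction t) (simp_all add: w sum_vector_matrix_mult_stochastic[OF M])
  have bound: "l1_norm (w t - q) \<le> (1 - c) ^ t * l1_norm (w 0 - q)" for t
  proof (induction t)
    case (Suc t)
    have "l1_norm (w (Suc t) - q) \<le> (1 - c) * l1_norm (w t - q)"
      using l1_norm_contraction[OF M minor v, of "w t - q"] mass q
      by (simp add: w vector_matrix_mult_diff_distrib sum_subtractf)
    also have "\<dots> \<le> (1 - c) * ((1 - c) ^ t * l1_norm (w 0 - q))"
      using Suc c1 by (intro mult_left_mono) auto
    finally show ?case by simp
  qed simp
  have "(\<lambda>t. w t $ k - q $ k) \<longlonglongrightarrow> 0"
  proof (rule Lim_null_comparison)
    have "\<bar>(w t - q) $ k\<bar> \<le> l1_norm (w t - q)" for t
      unfolding l1_norm_def by (rule member_le_sum) auto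
    hence "norm (w t $ k - q $ k) \<le> (1 - c) ^ t * l1_norm (w 0 - q)" for t
      using bound[of t] by (metis order_trans real_norm_def vector_minus_component)
    thus "\<forall>\<^sub>F t in sequentially. norm (w t $ k - q $ k) \<le> (1 - c) ^ t * l1_norm (w 0 - q)"
      by (simp add: always_eventually)
    show "(\<lambda>t. (1 - c) ^ t * l1_norm (w 0 - q)) \<longlonglongrightarrow> 0"
      using c c1 by (intro tendsto_mult_left_zero LIMSEQ_power_zero) auto
  qed
  thus ?thesis by (simp add: Lim_null[symmetric])
qed

lemma abs_stochastic_mult_vector_le:
  fixes P :: "real^'n^'n"
  assumes P: "row_stochastic P" and y: "\<forall>j. \<bar>y $ j\<bar> \<le> b"
  shows "\<bar>(P *v y) $ i\<bar> \<le> b"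
proof -
  have "\<bar>(P *v y) $ i\<bar> \<le> (\<Sum>j\<in>UNIV. P $ i $ j * \<bar>y $ j\<bar>)"
    using P by (auto simp: matrix_vector_mult_def row_stochastic_def abs_mult
        intro: order_trans[OF sum_abs])
  also have "\<dots> \<le> (\<Sum>j\<in>UNIV. P $ i $ j * b)"
    using P y by (intro sum_mono mult_left_mono) (auto simp: row_stochastic_def)
  also have "\<dots> = b"
    using P by (simp add: row_stochastic_def sum_distrib_right[symmetric])
  finally show ?thesis .
qed

lemma invertible_mat_1_minus_diag_mat_mult:
  fixes P :: "real^'n^'n"
  assumes P: "row_stochastic P" and alpha: "\<forall>i. 0 \<le> alpha $ i \<and> alpha $ i < 1"
  shows "invertible (mat 1 - diag_mat alpha ** P)"
proof -
  \<comment> \<open>Maximum principle: at a coordinate where the absolute value of a kernel vector is largest,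
    the equation y = A P y forces that value to vanish.\<close>
  have "y = 0" if y0: "(mat 1 - diag_mat alpha ** P) *v y = 0" for y
  proof -
    have "Max (range (\<lambda>j. \<bar>y $ j\<bar>)) \<in> range (\<lambda>j. \<bar>y $ j\<bar>)" by (intro Max_in) auto
    then obtain i where "\<bar>y $ i\<bar> = Max (range (\<lambda>j. \<bar>y $ j\<bar>))" by (metis rangeE)
    hence ymax: "\<forall>j. \<bar>y $ j\<bar> \<le> \<bar>y $ i\<bar>" by simp
    have "y $ i = alpha $ i * (P *v y) $ i"
      using arg_cong[OF y0, of "\<lambda>z. z $ i"]
      by (simp add: matrix_vector_mult_diff_rdistrib matrix_vector_mul_assoc[symmetric]
          diag_mat_vector_mult_nth)
    hence "\<bar>y $ i\<bar> \<le> alpha $ i * \<bar>y $ i\<bar>"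
      using alpha abs_stochastic_mult_vector_le[OF P ymax, of i]
      by (simp add: abs_mult mult_left_mono)
    hence "(1 - alpha $ i) * \<bar>y $ i\<bar> \<le> 0" by (simp add: algebra_simps)
    hence "\<bar>y $ i\<bar> = 0" using alpha by (auto simp: mult_le_0_iff not_le[symmetric])
    thus "y = 0" using ymax by (simp add: vec_eq_iff)
  qed
  thus ?thesis
    by (metis matrix_left_invertible_ker invertible_left_inverse)
qed

lemma restart_walk_stationary:
  assumes P: "row_stochastic (trans_matrix W)" and v: "(\<Sum>j\<in>UNIV. v $ j) = 1"
    and x: "x v* (mat 1 - diag_mat alpha ** trans_matrix W) = v"
  shows restart_mass_eq_1: "(\<Sum>i\<in>UNIV. x $ i * (1 - alpha $ i)) = 1"
    and restart_walk_stationary_eq: "x v* restart_walk_matrix W alpha v = x"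
proof -
  define a where "a = x v* diag_mat alpha"
  have x_eq: "x = v + a v* trans_matrix W"
    using x by (simp add: a_def vector_matrix_mult_diff_rdistrib vector_matrix_mul_assoc
        algebra_simps)
  have "(\<Sum>i\<in>UNIV. x $ i) = 1 + (\<Sum>i\<in>UNIV. x $ i * alpha $ i)"
    by (subst x_eq) (simp add: v sum.distrib sum_vector_matrix_mult_stochastic[OF P]
        a_def vector_mult_diag_mat_nth)
  thus mass: "(\<Sum>i\<in>UNIV. x $ i * (1 - alpha $ i)) = 1"
    by (simp add: right_diff_distrib sum_subtractf)
  have "x v* restart_walk_matrix W alpha v
      = a v* trans_matrix W + (\<Sum>i\<in>UNIV. x $ i * (1 - alpha $ i)) *\<^sub>R v"
    by (simp add: restart_walk_matrix_def a_def vector_matrix_mult_add_rdistrib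
        vector_matrix_mul_assoc[symmetric] vector_mult_ones_vT mat_1_minus_diag_mat
        vector_mult_diag_mat_nth)
  also have "\<dots> = x" using mass x_eq by simp
  finally show "x v* restart_walk_matrix W alpha v = x" .
qed

lemma restart_cond_tendsto:
  assumes walk: "\<And>k. (\<lambda>t. walk_dist W alpha v mu0 t $ k) \<longlonglongrightarrow> s * x $ k"
    and s: "s \<noteq> 0" and mass: "(\<Sum>k\<in>UNIV. x $ k * (1 - alpha $ k)) = 1"
  shows "(\<lambda>t. restart_cond W alpha v mu0 t j) \<longlonglongrightarrow> x $ j * (1 - alpha $ j)"
proof -
  have "(\<lambda>t. restart_joint W alpha v mu0 t k) \<longlonglongrightarrow> s * (x $ k * (1 - alpha $ k))" for k
    unfolding restart_joint_def mult.assoc[symmetric] by (intro tendsto_mult walk tendsto_const)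
  hence "(\<lambda>t. restart_cond W alpha v mu0 t j)
           \<longlonglongrightarrow> s * (x $ j * (1 - alpha $ j)) / (\<Sum>k\<in>UNIV. s * (x $ k * (1 - alpha $ k)))"
    unfolding restart_cond_def using s mass
    by (intro tendsto_divide tendsto_sum) (auto simp: sum_distrib_left[symmetric])
  thus ?thesis using s mass by (simp add: sum_distrib_left[symmetric])
qed

theorem theorem3:
  fixes W :: "real^'n^'n" and alpha v :: "real^'n"
  assumes nonneg: "\<forall>i j. W $ i $ j \<ge> 0"
    and rows: "\<forall>i. \<exists>j. W $ i $ j > 0"
    and conn: "weakly_connected W"
    and alpha: "\<forall>i. 0 \<le> alpha $ i \<and> alpha $ i < 1"
    and v: "prob_vector v"
  shows "\<forall>mu0. prob_vector mu0 \<longrightarrow>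
           (\<forall>j. (\<lambda>t. restart_cond W alpha v mu0 t j) \<longlonglongrightarrow>
              (v v* (matrix_inv (mat 1 - diag_mat alpha ** trans_matrix W)
                      ** (mat 1 - diag_mat alpha))) $ j)"
proof (intro allI impI)
  fix mu0 :: "real^'n" and j assume mu0: "prob_vector mu0"
  define M where "M = restart_walk_matrix W alpha v"
  define x where "x = v v* matrix_inv (mat 1 - diag_mat alpha ** trans_matrix W)"
  have P: "row_stochastic (trans_matrix W)" using nonneg rows by (rule row_stochastic_trans_matrix)
  have vsum: "(\<Sum>j\<in>UNIV. v $ j) = 1" using v by (simp add: prob_vector_def)
  have "x v* (mat 1 - diag_mat alpha ** trans_matrix W) = v"
    using invertible_mat_1_minus_diag_mat_mult[OF P alpha]
    by (simp add: x_def vector_matrix_mul_assoc matrix_inv_left)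
  note mass = restart_mass_eq_1[OF P vsum this] and stat = restart_walk_stationary_eq[OF P vsum this]
  have M: "row_stochastic M"
    unfolding M_def using P alpha v by (intro row_stochastic_restart_walk_matrix) (auto intro: less_imp_le)
  obtain c where c: "0 < c" and minor: "\<forall>i j. c * v $ j \<le> M $ i $ j"
    unfolding M_def using P alpha v by (rule restart_walk_doeblin)
  define \<sigma> where "\<sigma> = (\<Sum>i\<in>UNIV. x $ i)"
  have "\<sigma> \<noteq> 0"
    using doeblin_zero_sum_fixed_point[OF M c minor vsum, of x] stat mass by (auto simp: M_def \<sigma>_def)
  have "(\<lambda>t. walk_dist W alpha v mu0 t $ k) \<longlonglongrightarrow> (1 / \<sigma>) * x $ k" for k
    using doeblin_tendsto_stationary[OF M c minor vsum, of "(1 / \<sigma>) *\<^sub>R x" "walk_dist W alpha v mu0"]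
      stat mu0 \<open>\<sigma> \<noteq> 0\<close>
    by (simp add: M_def \<sigma>_def scaleR_vector_matrix_assoc sum_divide_distrib[symmetric]
        prob_vector_def)
  hence "(\<lambda>t. restart_cond W alpha v mu0 t j) \<longlonglongrightarrow> x $ j * (1 - alpha $ j)"
    using \<open>\<sigma> \<noteq> 0\<close> mass by (intro restart_cond_tendsto[where s = "1 / \<sigma>"]) auto
  thus "(\<lambda>t. restart_cond W alpha v mu0 t j) \<longlonglongrightarrow>
      (v v* (matrix_inv (mat 1 - diag_mat alpha ** trans_matrix W) ** (mat 1 - diag_mat alpha))) $ j"
    by (simp add: x_def vector_matrix_mul_assoc[symmetric] mat_1_minus_diag_mat
        vector_mult_diag_mat_nth)
qed

end
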